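(* Let $d\ge1$ and let $(\alpha_0,\alpha_1,\dots)$ be a sequence of $d\times d$ complex matrices with $\|\alpha_i\|<1$, with associated block CMV matrices $\mathcal{C}=\mathcal{C}(\alpha_0,\alpha_1,\dots)$ and $\hat{\mathcal{C}}=\hat{\mathcal{C}}(\alpha_0,\alpha_1,\dots)$. Then for every $j\in\mathbb{N}$, $$\mathcal{C}=\begin{cases}(\mathbb{1}_j\oplus\mathcal{C}^{(j)})(\mathcal{C}_j\oplus\mathbb{1}_\infty), & j\text{ even},\\ (\mathcal{C}_j\oplus\mathbb{1}_\infty)(\mathbb{1}_j\oplus\hat{\mathcal{C}}^{(j)}), & j\text{ odd},\end{cases}\qquad \hat{\mathcal{C}}=\begin{cases}(\hat{\mathcal{C}}_j\oplus\mathbb{1}_\infty)(\mathbb{1}_j\oplus\hat{\mathcal{C}}^{(j)}), & j\text{ even},\\ (\mathbb{1}_j\oplus\mathcal{C}^{(j)})(\hat{\mathcal{C}}_j\oplus\mathbb{1}_\infty), & j\text{ odd},\end{cases}$$ where $\mathcal{C}_j=\mathcal{C}_j(\alpha_0,\dots,\alpha_{j-1})$, $\hat{\mathcal{C}}_j=\hat{\mathcal{C}}_j(\alpha_0,\dots,\alpha_{j-1})$, $\mathcal{C}^{(j)}=\mathcal{C}(\alpha_j,\alpha_{j+1},\dots)$ and $\hat{\mathcal{C}}^{(j)}=\hat{\mathcal{C}}(\alpha_j,\alpha_{j+1},\dots)$. (These are $V_j$-overlapping factorizations.)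
   Context: Let $\ell^2$ have canonical basis $\{e_i\}_{i\ge0}$ and canonical subspaces $V_m=\operatorname{span}\{e_{md},\dots,e_{md+d-1}\}$, $m\ge0$, so $\ell^2=\bigoplus_{m\ge0}V_m$. For a $d\times d$ matrix $\alpha$ with $\|\alpha\|\le1$ set $\rho^L=(\mathbb{1}-\alpha^\dagger\alpha)^{1/2}$, $\rho^R=(\mathbb{1}-\alpha\alpha^\dagger)^{1/2}$ and $\Theta(\alpha)=\begin{pmatrix}\alpha^\dagger&\rho^L\\ \rho^R&-\alpha\end{pmatrix}$ ($\mathbb{1}$ the $d\times d$ identity). Given $(\alpha_0,\alpha_1,\dots)$, let $\mathcal{L}=\Theta(\alpha_0)\oplus\Theta(\alpha_2)\oplus\Theta(\alpha_4)\oplus\cdots$ and $\mathcal{M}=\mathbb{1}\oplus\Theta(\alpha_1)\oplus\Theta(\alpha_3)\oplus\cdots$ (so that $\Theta(\alpha_i)$ acts on $V_i\oplus V_{i+1}$), and define the block CMV matrices $\mathcal{C}(\alpha_0,\alpha_1,\dots)=\mathcal{L}\mathcal{M}$, $\hat{\mathcal{C}}(\alpha_0,\alpha_1,\dots)=\mathcal{M}\mathcal{L}$. For $N\ge0$ and $(\alpha_0,\dots,\alpha_{N-1})$, the finite block CMV matrices acting on $V_0\oplus\cdots\oplus V_N$ are $\mathcal{C}_N=\mathcal{L}_N\mathcal{M}_N$ and $\hat{\mathcal{C}}_N=\mathcal{M}_N\mathcal{L}_N$, where for odd $N$: $\mathcal{L}_N=\Theta(\alpha_0)\oplus\Theta(\alpha_2)\oplus\cdots\oplus\Theta(\alpha_{N-1})$,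 $\mathcal{M}_N=\mathbb{1}\oplus\Theta(\alpha_1)\oplus\cdots\oplus\Theta(\alpha_{N-2})\oplus\mathbb{1}$; for even $N$: $\mathcal{L}_N=\Theta(\alpha_0)\oplus\cdots\oplus\Theta(\alpha_{N-2})\oplus\mathbb{1}$, $\mathcal{M}_N=\mathbb{1}\oplus\Theta(\alpha_1)\oplus\cdots\oplus\Theta(\alpha_{N-1})$ (with $\mathcal{C}_0=\hat{\mathcal C}_0=\mathbb{1}$). In the factorizations, $\mathcal{C}_j,\hat{\mathcal{C}}_j$ act on $V_0\oplus\cdots\oplus V_j$; $\mathcal{C}^{(j)},\hat{\mathcal{C}}^{(j)}$ act on $\bigoplus_{m\ge j}V_m$ (with $V_j$ in the role of the first block); $\mathbb{1}_j$ is the identity on $V_0\oplus\cdots\oplus V_{j-1}$ and $\mathbb{1}_\infty$ is the identity on $\bigoplus_{m>j}V_m$. *)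

theory Defs
  imports "HOL-Analysis.Analysis"
begin

text \<open>A d x d matrix is a function
  nat => nat => complex of which only the entries with indices below d matter.
  An operator on l^2 is represented by its (infinite) matrix with respect to the
  canonical basis e_0, e_1, ...; a block matrix (blocks indexed by the subspaces
  V_m) is a function nat => nat => (d x d matrix).\<close>

type_synonym cmat = "nat \<Rightarrow> nat \<Rightarrow> complex"
type_synonym bmat = "nat \<Rightarrow> nat \<Rightarrow> cmat"

definition dmult :: "nat \<Rightarrow> cmat \<Rightarrow> cmat \<Rightarrow> cmat" where
  "dmult d A B = (\<lambda>i j. \<Sum>k<d. A i k * B k j)"

definition dadj :: "cmat \<Rightarrow> cmat" where
  "dadj A = (\<lambda>i j. cnj (A j i))"

definition did :: "cmat" where
  "did = (\<lambda>i j. if i = j then 1 else 0)"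

definition dminus :: "cmat \<Rightarrow> cmat \<Rightarrow> cmat" where
  "dminus A B = (\<lambda>i j. A i j - B i j)"

definition zblk :: "cmat" where
  "zblk = (\<lambda>i j. 0)"

definition vnorm :: "nat \<Rightarrow> (nat \<Rightarrow> complex) \<Rightarrow> real" where
  "vnorm d v = sqrt (\<Sum>k<d. (cmod (v k))\<^sup>2)"

definition mulv :: "nat \<Rightarrow> cmat \<Rightarrow> (nat \<Rightarrow> complex) \<Rightarrow> (nat \<Rightarrow> complex)" where
  "mulv d A v = (\<lambda>i. \<Sum>k<d. A i k * v k)"

definition opnorm :: "nat \<Rightarrow> cmat \<Rightarrow> real" where
  "opnorm d A = Sup ((\<lambda>v. vnorm d (mulv d A v)) ` {v. vnorm d v \<le> 1})"

definition hermitian :: "nat \<Rightarrow> cmat \<Rightarrow> bool" where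
  "hermitian d A \<longleftrightarrow> (\<forall>i<d. \<forall>j<d. A i j = cnj (A j i))"

definition psd :: "nat \<Rightarrow> cmat \<Rightarrow> bool" where
  "psd d A \<longleftrightarrow> hermitian d A \<and>
     (\<forall>v. 0 \<le> Re (\<Sum>i<d. cnj (v i) * mulv d A v i))"

text \<open>The positive semidefinite square root (entries outside d x d set to 0,
  which makes it unique).\<close>
definition msqrt :: "nat \<Rightarrow> cmat \<Rightarrow> cmat" where
  "msqrt d M = (THE S. (\<forall>i j. (d \<le> i \<or> d \<le> j) \<longrightarrow> S i j = 0) \<and> psd d S \<and>
                     (\<forall>i<d. \<forall>j<d. dmult d S S i j = M i j))"

definition rhoL :: "nat \<Rightarrow> cmat \<Rightarrow> cmat" where
  "rhoL d \<alpha> = msqrt d (dminus did (dmult d (dadj \<alpha>) \<alpha>))"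

definition rhoR :: "nat \<Rightarrow> cmat \<Rightarrow> cmat" where
  "rhoR d \<alpha> = msqrt d (dminus did (dmult d \<alpha> (dadj \<alpha>)))"

definition theta_blk :: "nat \<Rightarrow> cmat \<Rightarrow> nat \<Rightarrow> nat \<Rightarrow> cmat" where
  "theta_blk d \<alpha> s t =
     (if s = 0 \<and> t = 0 then dadj \<alpha>
      else if s = 0 then rhoL d \<alpha>
      else if t = 0 then rhoR d \<alpha>
      else (\<lambda>i j. - \<alpha> i j))"

text \<open>Scalar matrix of a block matrix: V_m = span{e_{md},...,e_{md+d-1}}.\<close>
definition scal :: "nat \<Rightarrow> bmat \<Rightarrow> cmat" where
  "scal d B = (\<lambda>p q. B (p div d) (q div d) (p mod d) (q mod d))"

definition mprod :: "cmat \<Rightarrow> cmat \<Rightarrow> cmat" where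
  "mprod A B = (\<lambda>p q. infsum (\<lambda>r. A p r * B r q) UNIV)"

definition ident :: "cmat" where
  "ident = (\<lambda>p q. if p = q then 1 else 0)"

text \<open>L = Theta(a_0) + Theta(a_2) + ..., M = 1 + Theta(a_1) + Theta(a_3) + ...\<close>
definition Lblk :: "nat \<Rightarrow> (nat \<Rightarrow> cmat) \<Rightarrow> bmat" where
  "Lblk d a = (\<lambda>m m'. if m div 2 = m' div 2
                  then theta_blk d (a (2 * (m div 2))) (m mod 2) (m' mod 2) else zblk)"

definition Mblk :: "nat \<Rightarrow> (nat \<Rightarrow> cmat) \<Rightarrow> bmat" where
  "Mblk d a = (\<lambda>m m'. if m = 0 \<and> m' = 0 then did
                  else if 1 \<le> m \<and> 1 \<le> m' \<and> (m - 1) div 2 = (m' - 1) div 2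
                  then theta_blk d (a (2 * ((m - 1) div 2) + 1)) ((m - 1) mod 2) ((m' - 1) mod 2)
                  else zblk)"

definition cmv :: "nat \<Rightarrow> (nat \<Rightarrow> cmat) \<Rightarrow> cmat" where
  "cmv d a = mprod (scal d (Lblk d a)) (scal d (Mblk d a))"

definition cmv_hat :: "nat \<Rightarrow> (nat \<Rightarrow> cmat) \<Rightarrow> cmat" where
  "cmv_hat d a = mprod (scal d (Mblk d a)) (scal d (Lblk d a))"

text \<open>Finite block CMV matrices on V_0 + ... + V_N (entries outside are 0).
  They only depend on a 0, ..., a (N-1).  L_N: for even N the last block is 1;
  M_N: for odd N the last block is 1.\<close>
definition Lfin :: "nat \<Rightarrow> (nat \<Rightarrow> cmat) \<Rightarrow> nat \<Rightarrow> bmat" where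
  "Lfin d a N = (\<lambda>m m'. if m \<le> N \<and> m' \<le> N then
                     (if m = N \<and> m' = N \<and> even N then did else Lblk d a m m')
                   else zblk)"

definition Mfin :: "nat \<Rightarrow> (nat \<Rightarrow> cmat) \<Rightarrow> nat \<Rightarrow> bmat" where
  "Mfin d a N = (\<lambda>m m'. if m \<le> N \<and> m' \<le> N then
                     (if m = N \<and> m' = N \<and> odd N then did else Mblk d a m m')
                   else zblk)"

definition cmv_fin :: "nat \<Rightarrow> (nat \<Rightarrow> cmat) \<Rightarrow> nat \<Rightarrow> cmat" where
  "cmv_fin d a N = mprod (scal d (Lfin d a N)) (scal d (Mfin d a N))"

definition cmv_hat_fin :: "nat \<Rightarrow> (nat \<Rightarrow> cmat) \<Rightarrow> nat \<Rightarrow> cmat" where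
  "cmv_hat_fin d a N = mprod (scal d (Mfin d a N)) (scal d (Lfin d a N))"

text \<open>1_j + X: identity on V_0 + ... + V_(j-1), X acting on V_j + V_(j+1) + ...\<close>
definition emb_lo :: "nat \<Rightarrow> nat \<Rightarrow> cmat \<Rightarrow> cmat" where
  "emb_lo d j X = (\<lambda>p q. if p < j * d \<or> q < j * d then ident p q
                          else X (p - j * d) (q - j * d))"

text \<open>X + 1_infinity: X acting on V_0 + ... + V_j, identity on V_(j+1) + ...\<close>
definition emb_hi :: "nat \<Rightarrow> nat \<Rightarrow> cmat \<Rightarrow> cmat" where
  "emb_hi d j X = (\<lambda>p q. if p < (j + 1) * d \<and> q < (j + 1) * d then X p q else ident p q)"

end

theory Submission
  imports Defs
begin

text \<open>
  L is the direct sum of the 2 x 2 blocks Theta(alpha_2i) on V_2i + V_2i+1, and M that of 1 on V_0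
  and the blocks Theta(alpha_2i+1); hence L has no entries across an even index and M none across
  an odd one.  For even j, L therefore factors at V_j as a commuting product U_L W_L of an operator
  U_L = L_j + 1 living on V_0 + ... + V_j-1 and W_L = 1_j + L^(j) living on V_j + ...; likewise M
  factors one block later, at V_j+1, as U_M W_M with U_M = M_j + 1 and W_M = 1_j + M^(j).  Then
  L M = W_L (U_L U_M) W_M, and U_L U_M, which lives on V_0 + ... + V_j, commutes with W_M, giving
  L M = (W_L W_M)(U_L U_M); similarly M L = (U_M U_L)(W_M W_L).  For odd j the roles of L and M
  are exchanged.  Everything is block bookkeeping; the only analytic point is that all matrices
  involved are row-finite, so that their products are associative.
\<close>

section \<open>Products of row-finite infinite matrices\<close>

definition row_finite :: "cmat \<Rightarrow> bool" where
  "row_finite A \<longleftrightarrow> (\<forall>p. finite {q. A p q \<noteq> 0})"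

lemma mprod_eq_sum:
  assumes "finite S" "\<And>r. r \<notin> S \<Longrightarrow> A p r = 0"
  shows "mprod A B p q = (\<Sum>r\<in>S. A p r * B r q)"
proof -
  have "mprod A B p q = infsum (\<lambda>r. A p r * B r q) S"
    unfolding mprod_def by (rule infsum_cong_neutral) (use assms(2) in auto)
  then show ?thesis using assms(1) by simp
qed

lemma mprod_ident_left [simp]: "mprod ident B = B"
proof (intro ext)
  fix p q show "mprod ident B p q = B p q"
    by (subst mprod_eq_sum[of "{p}"]) (auto simp: ident_def)
qed

lemma mprod_ident_right [simp]: "mprod A ident = A"
proof (intro ext)
  fix p q
  have "mprod A ident p q = infsum (\<lambda>r. A p r * ident r q) {q}"
    unfolding mprod_def by (rule infsum_cong_neutral) (auto simp: ident_def)
  then show "mprod A ident p q = A p q" by (simp add: ident_def)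
qed

lemma mprod_cong:
  assumes "\<And>r. A p r * B r q = A' p r * B' r q"
  shows "mprod A B p q = mprod A' B' p q"
  unfolding mprod_def using assms by simp

text \<open>Without row-finiteness the entries of a product are infinite sums, which \<open>infsum\<close> sets
  to 0 when they do not converge, and associativity can fail.\<close>

lemma mprod_assoc:
  assumes "row_finite A" "row_finite B"
  shows "mprod (mprod A B) C = mprod A (mprod B C)"
proof (intro ext)
  fix p q
  let ?S = "{r. A p r \<noteq> 0}"
  let ?T = "\<Union>r\<in>?S. {s. B r s \<noteq> 0}"
  have fin: "finite ?S" "finite ?T" using assms unfolding row_finite_def by auto
  have AB: "mprod A B p s = (\<Sum>r\<in>?S. A p r * B r s)" for s
    by (rule mprod_eq_sum) (use fin in auto)
  have "mprod (mprod A B) C p q = (\<Sum>s\<in>?T. mprod A B p s * C s q)"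
    by (rule mprod_eq_sum) (use fin in \<open>auto simp: AB intro!: sum.neutral\<close>)
  also have "\<dots> = (\<Sum>r\<in>?S. A p r * (\<Sum>s\<in>?T. B r s * C s q))"
    by (simp add: AB sum_distrib_left sum_distrib_right mult.assoc sum.swap[of _ ?T])
  also have "\<dots> = (\<Sum>r\<in>?S. A p r * mprod B C r q)"
    by (intro sum.cong refl arg_cong2[where f = "(*)"] mprod_eq_sum[symmetric]) (use fin in auto)
  also have "\<dots> = mprod A (mprod B C) p q"
    by (rule mprod_eq_sum[symmetric]) (use fin in auto)
  finally show "mprod (mprod A B) C p q = mprod A (mprod B C) p q" .
qed

definition acts_below :: "nat \<Rightarrow> cmat \<Rightarrow> bool" where
  "acts_below k U \<longleftrightarrow> (\<forall>p q. k \<le> p \<or> k \<le> q \<longrightarrow> U p q = ident p q)"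

definition acts_from :: "nat \<Rightarrow> cmat \<Rightarrow> bool" where
  "acts_from k W \<longleftrightarrow> (\<forall>p q. p < k \<or> q < k \<longrightarrow> W p q = ident p q)"

lemma acts_below_mono: "acts_below k U \<Longrightarrow> k \<le> k' \<Longrightarrow> acts_below k' U"
  by (auto simp: acts_below_def)

lemma acts_from_mono: "acts_from k' W \<Longrightarrow> k \<le> k' \<Longrightarrow> acts_from k W"
  by (auto simp: acts_from_def)

lemma acts_below_mprod:
  assumes "acts_below k U" "acts_below k V"
  shows "acts_below k (mprod U V)"
  unfolding acts_below_def
proof (intro allI impI)
  fix p q assume "k \<le> p \<or> k \<le> q"
  then show "mprod U V p q = ident p q"
  proof
    assume "k \<le> p"
    then have "mprod U V p q = mprod ident V p q"
      using assms(1) by (intro mprod_cong) (simp add: acts_below_def)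
    then show ?thesis using \<open>k \<le> p\<close> assms(2) by (simp add: acts_below_def)
  next
    assume "k \<le> q"
    then have "mprod U V p q = mprod U ident p q"
      using assms(2) by (intro mprod_cong) (simp add: acts_below_def)
    then show ?thesis using \<open>k \<le> q\<close> assms(1) by (simp add: acts_below_def)
  qed
qed

lemma acts_from_mprod:
  assumes "acts_from k U" "acts_from k V"
  shows "acts_from k (mprod U V)"
  unfolding acts_from_def
proof (intro allI impI)
  fix p q assume "p < k \<or> q < k"
  then show "mprod U V p q = ident p q"
  proof
    assume "p < k"
    then have "mprod U V p q = mprod ident V p q"
      using assms(1) by (intro mprod_cong) (simp add: acts_from_def)
    then show ?thesis using \<open>p < k\<close> assms(2) by (simp add: acts_from_def)
  next
    assume "q < k"
    then have "mprod U V p q = mprod U ident p q"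
      using assms(2) by (intro mprod_cong) (simp add: acts_from_def)
    then show ?thesis using \<open>q < k\<close> assms(1) by (simp add: acts_from_def)
  qed
qed

lemma mprod_acts_below_acts_from:
  assumes "acts_below k U" "acts_from k W"
  shows "mprod U W = (\<lambda>p q. if p < k then U p q else W p q)"
    and "mprod W U = (\<lambda>p q. if p < k then U p q else W p q)"
proof -
  have U: "U p r = ident p r" if "k \<le> p \<or> k \<le> r" for p r
    using assms(1) that unfolding acts_below_def by blast
  have W: "W p r = ident p r" if "p < k \<or> r < k" for p r
    using assms(2) that unfolding acts_from_def by blast
  have "U p r * W r q = U p r * ident r q" if "p < k" for p r q
    using that by (cases "r < k") (auto simp: U W ident_def)
  then have "mprod U W p q = (if p < k then mprod U ident p q else mprod ident W p q)" for p q
    by (cases "p < k") (auto intro!: mprod_cong simp: U ident_def)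
  moreover have "W p r * U r q = W p r * ident r q" if "k \<le> p" for p r q
    using that by (cases "k \<le> r") (auto simp: U W ident_def)
  then have "mprod W U p q = (if p < k then mprod ident U p q else mprod W ident p q)" for p q
    by (cases "p < k") (auto intro!: mprod_cong simp: W ident_def)
  ultimately show "mprod U W = (\<lambda>p q. if p < k then U p q else W p q)"
    and "mprod W U = (\<lambda>p q. if p < k then U p q else W p q)" by (simp_all add: fun_eq_iff)
qed

text \<open>Indices in [k, k') are acted on by both W1 and U2; the proof only moves a factor past
  one that lives on a disjoint index range.\<close>

lemma mprod_overlapping_factors:
  assumes "k \<le> k'"
    and "acts_below k U1" "acts_from k W1" "acts_below k' U2" "acts_from k' W2"
    and "row_finite U1" "row_finite W1" "row_finite U2" "row_finite W2"
  shows "mprod (mprod U1 W1) (mprod U2 W2) = mprod (mprod W1 W2) (mprod U1 U2)"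
    and "mprod (mprod U2 W2) (mprod U1 W1) = mprod (mprod U2 U1) (mprod W2 W1)"
proof -
  have commute: "mprod U W = mprod W U" if "acts_below k U" "acts_from k W" for k U W
    using mprod_acts_below_acts_from[OF that] by simp
  have "mprod (mprod U1 W1) (mprod U2 W2) = mprod W1 (mprod (mprod U1 U2) W2)"
    by (simp add: commute[OF assms(2,3)] mprod_assoc assms)
  also have "mprod (mprod U1 U2) W2 = mprod W2 (mprod U1 U2)"
    by (intro commute[OF _ assms(5)] acts_below_mprod acts_below_mono[OF assms(2,1)] assms(4))
  finally show "mprod (mprod U1 W1) (mprod U2 W2) = mprod (mprod W1 W2) (mprod U1 U2)"
    by (simp add: mprod_assoc assms)
  have "mprod (mprod U2 W2) (mprod U1 W1) = mprod U2 (mprod (mprod W2 W1) U1)"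
    by (simp add: commute[OF assms(2,3)] mprod_assoc assms)
  also have "mprod (mprod W2 W1) U1 = mprod U1 (mprod W2 W1)"
    by (intro commute[OF assms(2), symmetric] acts_from_mprod acts_from_mono[OF assms(5,1)] assms(3))
  finally show "mprod (mprod U2 W2) (mprod U1 W1) = mprod (mprod U2 U1) (mprod W2 W1)"
    by (simp add: mprod_assoc assms)
qed

lemma acts_below_emb_hi: "acts_below ((j + 1) * d) (emb_hi d j X)"
  by (auto simp: acts_below_def emb_hi_def)

lemma acts_from_emb_lo: "acts_from (j * d) (emb_lo d j X)"
  by (auto simp: acts_from_def emb_lo_def)

lemma row_finite_emb_hi: "row_finite (emb_hi d j X)"
  unfolding row_finite_def
proof
  fix p
  have "{q. emb_hi d j X p q \<noteq> 0} \<subseteq> {..<(j + 1) * d} \<union> {p}"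
    by (auto simp: emb_hi_def ident_def)
  then show "finite {q. emb_hi d j X p q \<noteq> 0}" by (rule finite_subset) simp
qed

lemma row_finite_emb_lo:
  assumes "row_finite X"
  shows "row_finite (emb_lo d j X)"
  unfolding row_finite_def
proof
  fix p
  let ?k = "j * d"
  have "{q. emb_lo d j X p q \<noteq> 0} \<subseteq> {..<?k} \<union> {p} \<union> plus ?k ` {q. X (p - ?k) q \<noteq> 0}"
  proof
    fix q assume q: "q \<in> {q. emb_lo d j X p q \<noteq> 0}"
    show "q \<in> {..<?k} \<union> {p} \<union> plus ?k ` {q. X (p - ?k) q \<noteq> 0}"
    proof (cases "q < ?k \<or> q = p")
      case False
      then have "X (p - ?k) (q - ?k) \<noteq> 0" "q = ?k + (q - ?k)"
        using q by (auto simp: emb_lo_def ident_def split: if_splits)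
      then show ?thesis by (blast intro: rev_image_eqI)
    qed auto
  qed
  then show "finite {q. emb_lo d j X p q \<noteq> 0}"
    by (rule finite_subset) (use assms in \<open>simp add: row_finite_def\<close>)
qed

lemma emb_hi_mprod:
  assumes "\<And>p q. (j + 1) * d \<le> p \<or> (j + 1) * d \<le> q \<Longrightarrow> X p q = 0"
  shows "mprod (emb_hi d j X) (emb_hi d j Y) = emb_hi d j (mprod X Y)"
proof (intro ext)
  fix p q
  let ?N = "(j + 1) * d"
  consider "?N \<le> p" | "p < ?N" "?N \<le> q" | "p < ?N" "q < ?N" by linarith
  then show "mprod (emb_hi d j X) (emb_hi d j Y) p q = emb_hi d j (mprod X Y) p q"
  proof cases
    case 1
    then have "mprod (emb_hi d j X) (emb_hi d j Y) p q = mprod ident (emb_hi d j Y) p q"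
      by (intro mprod_cong) (simp add: emb_hi_def)
    with 1 show ?thesis by (simp add: emb_hi_def)
  next
    case 2
    then have "mprod (emb_hi d j X) (emb_hi d j Y) p q = mprod (emb_hi d j X) ident p q"
      by (intro mprod_cong) (simp add: emb_hi_def)
    with 2 show ?thesis by (simp add: emb_hi_def)
  next
    case 3
    then have "mprod (emb_hi d j X) (emb_hi d j Y) p q = mprod X Y p q"
      using assms by (intro mprod_cong) (auto simp: emb_hi_def ident_def)
    with 3 show ?thesis by (simp add: emb_hi_def)
  qed
qed

lemma emb_lo_mprod: "mprod (emb_lo d j X) (emb_lo d j Y) = emb_lo d j (mprod X Y)"
proof (intro ext)
  fix p q
  let ?k = "j * d"
  consider "p < ?k" | "?k \<le> p" "q < ?k" | "?k \<le> p" "?k \<le> q" by linarith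
  then show "mprod (emb_lo d j X) (emb_lo d j Y) p q = emb_lo d j (mprod X Y) p q"
  proof cases
    case 1
    then have "mprod (emb_lo d j X) (emb_lo d j Y) p q = mprod ident (emb_lo d j Y) p q"
      by (intro mprod_cong) (simp add: emb_lo_def)
    with 1 show ?thesis by (simp add: emb_lo_def)
  next
    case 2
    then have "mprod (emb_lo d j X) (emb_lo d j Y) p q = mprod (emb_lo d j X) ident p q"
      by (intro mprod_cong) (simp add: emb_lo_def)
    with 2 show ?thesis by (simp add: emb_lo_def)
  next
    case 3
    let ?f = "\<lambda>r. emb_lo d j X p r * emb_lo d j Y r q"
    have "mprod (emb_lo d j X) (emb_lo d j Y) p q = infsum ?f {?k..}"
      unfolding mprod_def by (rule infsum_cong_neutral) (use 3 in \<open>auto simp: emb_lo_def ident_def\<close>)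
    also have "{?k..} = plus ?k ` UNIV"
      by (metis image_add_atLeast atLeast_0 add_0_right)
    also have "infsum ?f \<dots> = infsum (\<lambda>r. X (p - ?k) r * Y r (q - ?k)) UNIV"
      by (subst infsum_reindex) (use 3 in \<open>auto simp: inj_on_def emb_lo_def comp_def\<close>)
    finally show ?thesis using 3 by (simp add: mprod_def emb_lo_def)
  qed
qed

section \<open>Block structure of L and M\<close>

lemma Lblk_cut:
  assumes "even k" "(m < k) \<noteq> (m' < k)"
  shows "Lblk d a m m' = zblk"
proof -
  obtain b where "k = 2 * b" using assms(1) by blast
  then have "x div 2 < b \<longleftrightarrow> x < k" for x
    using div_less_iff_less_mult[of 2 x b] by (simp add: mult.commute)
  then have "m div 2 \<noteq> m' div 2" using assms(2) by metis
  then show ?thesis by (simp add: Lblk_def)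
qed

lemma Mblk_cut:
  assumes "odd k" "(m < k) \<noteq> (m' < k)"
  shows "Mblk d a m m' = zblk"
proof -
  obtain b where "k = 2 * b + 1" using assms(1) by (blast elim: oddE)
  then have "(x - 1) div 2 < b \<longleftrightarrow> x < k" if "0 < x" for x
    using that div_less_iff_less_mult[of 2 "x - 1" b] by (simp add: mult.commute, linarith)
  then have "m = 0 \<or> m' = 0 \<or> (m - 1) div 2 \<noteq> (m' - 1) div 2"
    using assms(2) by (metis neq0_conv)
  then show ?thesis using assms(2) by (auto simp: Mblk_def)
qed

lemma Lblk_shift:
  assumes "even j"
  shows "Lblk d a (n + j) (n' + j) = Lblk d (\<lambda>k. a (k + j)) n n'"
  using assms by (auto simp: Lblk_def algebra_simps elim!: evenE)

text \<open>The first diagonal block of M(a_j, a_j+1, ...) is the identity, hence the restriction to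
  n, n' > 0, here and in Lblk_shift_Mblk.\<close>

lemma Mblk_shift:
  assumes "even j" "0 < n" "0 < n'"
  shows "Mblk d a (n + j) (n' + j) = Mblk d (\<lambda>k. a (k + j)) n n'"
proof -
  obtain t where j: "j = 2 * t" using assms(1) by blast
  have "(x + j - 1) div 2 = (x - 1) div 2 + t" "(x + j - 1) mod 2 = (x - 1) mod 2"
    if "0 < x" for x
  proof -
    have "x + j - 1 = (x - 1) + 2 * t" using that j by simp
    then show "(x + j - 1) div 2 = (x - 1) div 2 + t" "(x + j - 1) mod 2 = (x - 1) mod 2" by simp_all
  qed
  then show ?thesis using assms(2,3) by (simp add: Mblk_def j algebra_simps)
qed

lemma Mblk_shift_Lblk:
  assumes "odd j"
  shows "Mblk d a (n + j) (n' + j) = Lblk d (\<lambda>k. a (k + j)) n n'"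
proof -
  obtain t where j: "j = 2 * t + 1" using assms(1) by (blast elim: oddE)
  have "(x + j - 1) div 2 = x div 2 + t" "(x + j - 1) mod 2 = x mod 2" for x
    unfolding j by simp_all
  then show ?thesis by (simp add: Mblk_def Lblk_def j algebra_simps)
qed

lemma Lblk_shift_Mblk:
  assumes "odd j" "0 < n" "0 < n'"
  shows "Lblk d a (n + j) (n' + j) = Mblk d (\<lambda>k. a (k + j)) n n'"
proof -
  obtain t where j: "j = 2 * t + 1" using assms(1) by (blast elim: oddE)
  have "(x + j) div 2 = (x - 1) div 2 + t + 1" "(x + j) mod 2 = (x - 1) mod 2"
    if "0 < x" for x
  proof -
    have "x + j = (x - 1) + 2 * (t + 1)" using that j by simp
    then show "(x + j) div 2 = (x - 1) div 2 + t + 1" "(x + j) mod 2 = (x - 1) mod 2"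
      by simp_all
  qed
  then show ?thesis using assms(2,3) by (simp add: Mblk_def Lblk_def j algebra_simps)
qed

definition blk_ident :: bmat where
  "blk_ident = (\<lambda>m m'. if m = m' then did else zblk)"

definition blk_emb_hi :: "nat \<Rightarrow> bmat \<Rightarrow> bmat" where
  "blk_emb_hi j B = (\<lambda>m m'. if m \<le> j \<and> m' \<le> j then B m m' else blk_ident m m')"

definition blk_emb_lo :: "nat \<Rightarrow> bmat \<Rightarrow> bmat" where
  "blk_emb_lo j B = (\<lambda>m m'. if m < j \<or> m' < j then blk_ident m m' else B (m - j) (m' - j))"

lemma Lblk_split_even:
  assumes "even j"
  shows "Lblk d a m m' =
    (if m < j then blk_emb_hi j (Lfin d a j) m m' else blk_emb_lo j (Lblk d (\<lambda>n. a (n + j))) m m')"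
  using Lblk_cut[OF assms, of m m' d a] Lblk_shift[OF assms, of d a "m - j" "m' - j"]
  by (auto simp: blk_emb_hi_def blk_emb_lo_def blk_ident_def Lfin_def)

lemma Mblk_split_even:
  assumes "even j"
  shows "Mblk d a m m' =
    (if m < j + 1 then blk_emb_hi j (Mfin d a j) m m' else blk_emb_lo j (Mblk d (\<lambda>n. a (n + j))) m m')"
proof -
  have "odd (j + 1)" using assms by simp
  from Mblk_cut[OF this, of m m' d a] Mblk_shift[OF assms, of "m - j" "m' - j" d a] assms
  show ?thesis
    by (auto simp: blk_emb_hi_def blk_emb_lo_def blk_ident_def Mfin_def Mblk_def[of d "\<lambda>n. a (n + j)"])
qed

lemma Lblk_split_odd:
  assumes "odd j"
  shows "Lblk d a m m' =
    (if m < j + 1 then blk_emb_hi j (Lfin d a j) m m' else blk_emb_lo j (Mblk d (\<lambda>n. a (n + j))) m m')"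
proof -
  have "even (j + 1)" using assms by simp
  from Lblk_cut[OF this, of m m' d a] Lblk_shift_Mblk[OF assms, of "m - j" "m' - j" d a] assms
  show ?thesis
    by (auto simp: blk_emb_hi_def blk_emb_lo_def blk_ident_def Lfin_def Mblk_def[of d "\<lambda>n. a (n + j)"])
qed

lemma Mblk_split_odd:
  assumes "odd j"
  shows "Mblk d a m m' =
    (if m < j then blk_emb_hi j (Mfin d a j) m m' else blk_emb_lo j (Lblk d (\<lambda>n. a (n + j))) m m')"
  using Mblk_cut[OF assms, of m m' d a] Mblk_shift_Lblk[OF assms, of d a "m - j" "m' - j"]
  by (auto simp: blk_emb_hi_def blk_emb_lo_def blk_ident_def Mfin_def)

section \<open>From block matrices to scalar matrices\<close>

lemma blk_ident_div_mod [simp]: "blk_ident (p div d) (q div d) (p mod d) (q mod d) = ident p q"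
proof -
  have "p = q \<longleftrightarrow> p div d = q div d \<and> p mod d = q mod d"
    by (metis div_mult_mod_eq)
  then show ?thesis by (auto simp: blk_ident_def did_def zblk_def ident_def)
qed

lemma emb_hi_scal:
  assumes "0 < d"
  shows "emb_hi d j (scal d B) = scal d (blk_emb_hi j B)"
proof (intro ext)
  fix p q
  have lt: "p < (j + 1) * d \<longleftrightarrow> p div d \<le> j" for p
    using div_less_iff_less_mult[OF assms, of p "j + 1"] by linarith
  show "emb_hi d j (scal d B) p q = scal d (blk_emb_hi j B) p q"
    unfolding emb_hi_def lt blk_emb_hi_def scal_def by simp
qed

lemma emb_lo_scal:
  assumes "0 < d"
  shows "emb_lo d j (scal d B) = scal d (blk_emb_lo j B)"
proof (intro ext)
  fix p q
  have lt: "p < j * d \<longleftrightarrow> p div d < j" for p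
    using div_less_iff_less_mult[OF assms, of p j] by simp
  have shift: "(p - j * d) div d = p div d - j" "(p - j * d) mod d = p mod d" if "j * d \<le> p" for p
  proof -
    have "p = (p - j * d) + j * d" using that by simp
    then show "(p - j * d) div d = p div d - j" "(p - j * d) mod d = p mod d"
      using assms by (metis add_diff_cancel_left' div_mult_self1 less_not_refl2, metis mod_mult_self1)
  qed
  show "emb_lo d j (scal d B) p q = scal d (blk_emb_lo j B) p q"
  proof (cases "p < j * d \<or> q < j * d")
    case True
    then show ?thesis unfolding emb_lo_def blk_emb_lo_def scal_def lt by simp
  next
    case False
    then have "j * d \<le> p" "j * d \<le> q" "\<not> p div d < j" "\<not> q div d < j"
      using lt[of p] lt[of q] by linarith+
    then show ?thesis unfolding emb_lo_def blk_emb_lo_def scal_def by (simp add: shift)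
  qed
qed

lemma scal_if_less:
  assumes "0 < d"
  shows "scal d (\<lambda>m m'. if m < k then B m m' else B' m m') =
    (\<lambda>p q. if p < k * d then scal d B p q else scal d B' p q)"
proof (intro ext)
  fix p q
  have "p div d < k \<longleftrightarrow> p < k * d" by (rule div_less_iff_less_mult[OF assms])
  then show "scal d (\<lambda>m m'. if m < k then B m m' else B' m m') p q =
      (if p < k * d then scal d B p q else scal d B' p q)"
    by (simp add: scal_def)
qed

lemma acts_below_scal:
  assumes "0 < d" "\<And>m m'. k \<le> m \<or> k \<le> m' \<Longrightarrow> B m m' = blk_ident m m'"
  shows "acts_below (k * d) (scal d B)"
  unfolding acts_below_def
proof (intro allI impI)
  fix p q assume "k * d \<le> p \<or> k * d \<le> q"
  then have "k \<le> p div d \<or> k \<le> q div d"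
    using div_less_iff_less_mult[OF assms(1), of p k] div_less_iff_less_mult[OF assms(1), of q k]
    by linarith
  then show "scal d B p q = ident p q" using assms(2) by (simp add: scal_def)
qed

lemma acts_from_scal:
  assumes "0 < d" "\<And>m m'. m < k \<or> m' < k \<Longrightarrow> B m m' = blk_ident m m'"
  shows "acts_from (k * d) (scal d B)"
  unfolding acts_from_def
proof (intro allI impI)
  fix p q assume "p < k * d \<or> q < k * d"
  then have "p div d < k \<or> q div d < k"
    using div_less_iff_less_mult[OF assms(1), of p k] div_less_iff_less_mult[OF assms(1), of q k]
    by linarith
  then show "scal d B p q = ident p q" using assms(2) by (simp add: scal_def)
qed

lemma scal_eq_0:
  assumes "0 < d" "\<And>m m'. j < m \<or> j < m' \<Longrightarrow> B m m' = zblk"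
    and "(j + 1) * d \<le> p \<or> (j + 1) * d \<le> q"
  shows "scal d B p q = 0"
proof -
  have "j < p div d \<or> j < q div d"
    using assms(3) div_less_iff_less_mult[OF assms(1), of p "j + 1"]
      div_less_iff_less_mult[OF assms(1), of q "j + 1"] by linarith
  then show ?thesis using assms(2) by (auto simp: scal_def zblk_def)
qed

lemma row_finite_scal:
  assumes "0 < d" "\<And>m m'. b m \<le> m' \<Longrightarrow> B m m' = zblk"
  shows "row_finite (scal d B)"
  unfolding row_finite_def
proof
  fix p
  have "scal d B p q = 0" if "b (p div d) * d \<le> q" for q
  proof -
    have "b (p div d) \<le> q div d"
      using that div_less_iff_less_mult[OF assms(1), of q "b (p div d)"] by linarith
    then show ?thesis using assms(2) by (simp add: scal_def zblk_def)
  qed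
  then have "{q. scal d B p q \<noteq> 0} \<subseteq> {..<b (p div d) * d}" by (auto simp: not_less[symmetric])
  then show "finite {q. scal d B p q \<noteq> 0}" by (rule finite_subset) simp
qed


section \<open>The factorizations\<close>

lemma acts_below_emb_hi_Lfin:
  assumes "0 < d" "even j"
  shows "acts_below (j * d) (emb_hi d j (scal d (Lfin d a j)))"
  unfolding emb_hi_scal[OF assms(1)]
proof (rule acts_below_scal[OF assms(1)])
  fix m m' assume "j \<le> m \<or> j \<le> m'"
  then show "blk_emb_hi j (Lfin d a j) m m' = blk_ident m m'"
    using Lblk_cut[OF assms(2), of m m' d a] assms(2)
    by (auto simp: blk_emb_hi_def blk_ident_def Lfin_def)
qed

lemma acts_below_emb_hi_Mfin:
  assumes "0 < d" "odd j"
  shows "acts_below (j * d) (emb_hi d j (scal d (Mfin d a j)))"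
  unfolding emb_hi_scal[OF assms(1)]
proof (rule acts_below_scal[OF assms(1)])
  fix m m' assume "j \<le> m \<or> j \<le> m'"
  then show "blk_emb_hi j (Mfin d a j) m m' = blk_ident m m'"
    using Mblk_cut[OF assms(2), of m m' d a] assms(2)
    by (auto simp: blk_emb_hi_def blk_ident_def Mfin_def)
qed

lemma acts_from_emb_lo_Mblk:
  assumes "0 < d"
  shows "acts_from ((j + 1) * d) (emb_lo d j (scal d (Mblk d a)))"
  unfolding emb_lo_scal[OF assms]
  by (rule acts_from_scal[OF assms]) (auto simp: blk_emb_lo_def blk_ident_def Mblk_def)

lemma scal_eq_mprod_emb:
  assumes d: "0 < d"
    and split: "\<And>m m'. B m m' = (if m < k then blk_emb_hi j X m m' else blk_emb_lo j Y m m')"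
    and "acts_below (k * d) (emb_hi d j (scal d X))" "acts_from (k * d) (emb_lo d j (scal d Y))"
  shows "scal d B = mprod (emb_hi d j (scal d X)) (emb_lo d j (scal d Y))"
proof -
  have "B = (\<lambda>m m'. if m < k then blk_emb_hi j X m m' else blk_emb_lo j Y m m')"
    by (rule ext, rule ext, rule split)
  then have "scal d B = (\<lambda>p q. if p < k * d then emb_hi d j (scal d X) p q else emb_lo d j (scal d Y) p q)"
    by (simp only: scal_if_less[OF d] emb_hi_scal[OF d] emb_lo_scal[OF d])
  also have "\<dots> = mprod (emb_hi d j (scal d X)) (emb_lo d j (scal d Y))"
    by (rule mprod_acts_below_acts_from(1)[OF assms(3,4), symmetric])
  finally show ?thesis .
qed

lemma row_finite_Lblk:
  assumes "0 < d"
  shows "row_finite (scal d (Lblk d a))"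
proof (rule row_finite_scal[OF assms, of "\<lambda>m. m + 2"])
  fix m m' :: nat assume "m + 2 \<le> m'"
  moreover have "m = 2 * (m div 2) + m mod 2" "m mod 2 < 2" by simp_all
  ultimately have "m < 2 * (m div 2) + 2" "\<not> m' < 2 * (m div 2) + 2" by linarith+
  then show "Lblk d a m m' = zblk" by (intro Lblk_cut[of "2 * (m div 2) + 2"]) simp_all
qed

lemma row_finite_Mblk:
  assumes "0 < d"
  shows "row_finite (scal d (Mblk d a))"
proof (rule row_finite_scal[OF assms, of "\<lambda>m. m + 2"])
  fix m m' :: nat assume "m + 2 \<le> m'"
  moreover have "m + 1 = 2 * ((m + 1) div 2) + (m + 1) mod 2" "(m + 1) mod 2 < 2" by simp_all
  ultimately have "m < 2 * ((m + 1) div 2) + 1" "\<not> m' < 2 * ((m + 1) div 2) + 1" by linarith+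
  then show "Mblk d a m m' = zblk" by (intro Mblk_cut[of "2 * ((m + 1) div 2) + 1"]) simp_all
qed

lemma emb_hi_cmv_fin:
  assumes "0 < d"
  shows "emb_hi d j (cmv_fin d a j) =
    mprod (emb_hi d j (scal d (Lfin d a j))) (emb_hi d j (scal d (Mfin d a j)))"
  unfolding cmv_fin_def
  by (rule emb_hi_mprod[symmetric], rule scal_eq_0[OF assms]) (auto simp: Lfin_def)

lemma emb_hi_cmv_hat_fin:
  assumes "0 < d"
  shows "emb_hi d j (cmv_hat_fin d a j) =
    mprod (emb_hi d j (scal d (Mfin d a j))) (emb_hi d j (scal d (Lfin d a j)))"
  unfolding cmv_hat_fin_def
  by (rule emb_hi_mprod[symmetric], rule scal_eq_0[OF assms]) (auto simp: Mfin_def)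

lemma cmv_factorization_even:
  assumes d: "0 < d" and j: "even j"
  shows "cmv d a = mprod (emb_lo d j (cmv d (\<lambda>n. a (n + j)))) (emb_hi d j (cmv_fin d a j))"
    and "cmv_hat d a = mprod (emb_hi d j (cmv_hat_fin d a j)) (emb_lo d j (cmv_hat d (\<lambda>n. a (n + j))))"
proof -
  let ?UL = "emb_hi d j (scal d (Lfin d a j))" and ?WL = "emb_lo d j (scal d (Lblk d (\<lambda>n. a (n + j))))"
  let ?UM = "emb_hi d j (scal d (Mfin d a j))" and ?WM = "emb_lo d j (scal d (Mblk d (\<lambda>n. a (n + j))))"
  have acts: "acts_below (j * d) ?UL" "acts_from (j * d) ?WL"
      "acts_below ((j + 1) * d) ?UM" "acts_from ((j + 1) * d) ?WM"
    by (rule acts_below_emb_hi_Lfin[OF d j] acts_from_emb_lo acts_below_emb_hi acts_from_emb_lo_Mblk[OF d])+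
  have fin: "row_finite ?UL" "row_finite ?WL" "row_finite ?UM" "row_finite ?WM"
    by (simp_all add: row_finite_emb_hi row_finite_emb_lo row_finite_Lblk row_finite_Mblk d)
  have L: "scal d (Lblk d a) = mprod ?UL ?WL"
    by (rule scal_eq_mprod_emb[OF d Lblk_split_even[OF j] acts(1,2)])
  have M: "scal d (Mblk d a) = mprod ?UM ?WM"
    by (rule scal_eq_mprod_emb[OF d Mblk_split_even[OF j] acts(3,4)])
  have "j * d \<le> (j + 1) * d" by simp
  note factors = mprod_overlapping_factors[OF this acts fin]
  show "cmv d a = mprod (emb_lo d j (cmv d (\<lambda>n. a (n + j)))) (emb_hi d j (cmv_fin d a j))"
    by (simp only: cmv_def L M factors(1) emb_lo_mprod emb_hi_cmv_fin[OF d])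
  show "cmv_hat d a = mprod (emb_hi d j (cmv_hat_fin d a j)) (emb_lo d j (cmv_hat d (\<lambda>n. a (n + j))))"
    by (simp only: cmv_hat_def L M factors(2) emb_lo_mprod emb_hi_cmv_hat_fin[OF d])
qed

lemma cmv_factorization_odd:
  assumes d: "0 < d" and j: "odd j"
  shows "cmv d a = mprod (emb_hi d j (cmv_fin d a j)) (emb_lo d j (cmv_hat d (\<lambda>n. a (n + j))))"
    and "cmv_hat d a = mprod (emb_lo d j (cmv d (\<lambda>n. a (n + j)))) (emb_hi d j (cmv_hat_fin d a j))"
proof -
  let ?UL = "emb_hi d j (scal d (Lfin d a j))" and ?WL = "emb_lo d j (scal d (Mblk d (\<lambda>n. a (n + j))))"
  let ?UM = "emb_hi d j (scal d (Mfin d a j))" and ?WM = "emb_lo d j (scal d (Lblk d (\<lambda>n. a (n + j))))"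
  have acts: "acts_below (j * d) ?UM" "acts_from (j * d) ?WM"
      "acts_below ((j + 1) * d) ?UL" "acts_from ((j + 1) * d) ?WL"
    by (rule acts_below_emb_hi_Mfin[OF d j] acts_from_emb_lo acts_below_emb_hi acts_from_emb_lo_Mblk[OF d])+
  have fin: "row_finite ?UM" "row_finite ?WM" "row_finite ?UL" "row_finite ?WL"
    by (simp_all add: row_finite_emb_hi row_finite_emb_lo row_finite_Lblk row_finite_Mblk d)
  have L: "scal d (Lblk d a) = mprod ?UL ?WL"
    by (rule scal_eq_mprod_emb[OF d Lblk_split_odd[OF j] acts(3,4)])
  have M: "scal d (Mblk d a) = mprod ?UM ?WM"
    by (rule scal_eq_mprod_emb[OF d Mblk_split_odd[OF j] acts(1,2)])
  have "j * d \<le> (j + 1) * d" by simp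
  note factors = mprod_overlapping_factors[OF this acts fin]
  show "cmv d a = mprod (emb_hi d j (cmv_fin d a j)) (emb_lo d j (cmv_hat d (\<lambda>n. a (n + j))))"
    by (simp only: cmv_def cmv_hat_def L M factors(2) emb_lo_mprod emb_hi_cmv_fin[OF d])
  show "cmv_hat d a = mprod (emb_lo d j (cmv d (\<lambda>n. a (n + j)))) (emb_hi d j (cmv_hat_fin d a j))"
    by (simp only: cmv_def cmv_hat_def L M factors(1) emb_lo_mprod emb_hi_cmv_hat_fin[OF d])
qed

theorem proposition4p1:
  fixes d :: nat and a :: "nat \<Rightarrow> cmat" and j :: nat
  assumes "1 \<le> d"
    and "\<forall>i. opnorm d (a i) < 1"
  shows "cmv d a =
           (if even j
            then mprod (emb_lo d j (cmv d (\<lambda>n. a (n + j)))) (emb_hi d j (cmv_fin d a j))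
            else mprod (emb_hi d j (cmv_fin d a j)) (emb_lo d j (cmv_hat d (\<lambda>n. a (n + j)))))
       \<and> cmv_hat d a =
           (if even j
            then mprod (emb_hi d j (cmv_hat_fin d a j)) (emb_lo d j (cmv_hat d (\<lambda>n. a (n + j))))
            else mprod (emb_lo d j (cmv d (\<lambda>n. a (n + j)))) (emb_hi d j (cmv_hat_fin d a j)))"
proof -
  have d: "0 < d" using assms(1) by simp
  show ?thesis
  proof (cases "even j")
    case True
    show ?thesis
      unfolding if_P[OF True] using cmv_factorization_even[OF d True, of a] by (rule conjI)
  next
    case False
    show ?thesis
      unfolding if_not_P[OF False] using cmv_factorization_odd[OF d False, of a] by (rule conjI)
  qed
qed

end
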